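(* Let $m\ge n\ge0$ be integers with $m+n$ odd, and let $r(m,n)=[\underbrace{2,\dots,2}_{m},-2,\underbrace{2,\dots,2}_{n}]$. Then the Alexander polynomial $\Delta_{K(r(m,n))}(t)$ (of degree $m+n+1$) has exactly two real zeros (counted with multiplicity), neither equal to $1$, and all its other $m+n-1$ zeros have modulus $1$; that is, $K(r(m,n))$ is a Salem fibred knot. *)

theory Defs
  imports Complex_Main "HOL-Computational_Algebra.Polynomial"
begin

fun cfrac :: "int list \<Rightarrow> rat" where
  "cfrac [] = 0"
| "cfrac (a # as) = 1 / (of_int a - cfrac as)"

definition r_mn :: "nat \<Rightarrow> nat \<Rightarrow> int list" where
  "r_mn m n = replicate m 2 @ [-2] @ replicate n 2"

text \<open>Alexander polynomial of the two-bridge knot K(q/p) (p odd), via the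
  Hartley--Minkus formula  Delta(t) = sum_{i=0}^{p-1} (-1)^i t^(sigma_i),
  sigma_i = sum_{j=1}^i (-1)^floor(j q'/p) (floor via integer div), where q' is q or q+p, whichever is odd.
  The result is normalised (multiplied by a power of t) to an ordinary
  polynomial with nonzero constant term; this does not affect its nonzero zeros.\<close>
definition minkus_sigma :: "int \<Rightarrow> int \<Rightarrow> nat \<Rightarrow> int" where
  "minkus_sigma p q i =
     (let q' = (if odd q then q else q + p)
      in \<Sum>j\<in>{1..i}. (if even ((int j * q') div p) then 1 else -1))"

definition alex_2bridge :: "int \<Rightarrow> int \<Rightarrow> int poly" where
  "alex_2bridge p q =
     (let s = minkus_sigma p q; mn = Min (s ` {..<nat p})
      in \<Sum>i<nat p. monom ((-1) ^ i) (nat (s i - mn)))"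

definition alex_K :: "rat \<Rightarrow> int poly" where
  "alex_K r = (case quotient_of r of (q, p) \<Rightarrow> alex_2bridge p q)"

end

theory Submission
  imports Defs
begin

text \<open>For \<open>r(m,n) = q/p\<close> one has \<open>p = m(4n+3) + 3n + 2\<close> and \<open>q = p - (4n+3)\<close>. The partial sums
  of the Hartley--Minkus signs zigzag in runs of consecutive values, and multiplying each run's
  alternating sum by \<open>1+t\<close> telescopes; altogether \<open>(1+t)^2 \<Delta>(t) = F(t) = B(t) + t^N B(1/t)\<close>
  with \<open>N = m+n+3\<close> and \<open>B(t) = 3t - 1 + 2(-1)^m t^(n+1) (1-t)\<close>.
  On \<open>|t| = 1\<close>, \<open>t^(-N/2) F(t) = 2 Re (t^(-N/2) B(t))\<close>, and \<open>|2 t^(n+1) (1-t)| < |3t - 1|\<close>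
  off \<open>t = -1\<close>, so the sign of this real part is governed by the argument of \<open>3t - 1\<close>, which
  runs from 0 to \<open>\<pi>\<close> over the upper half circle; the intermediate value theorem then yields
  \<open>(m+n-1)/2\<close> zeros there, and conjugation doubles them. Since \<open>\<Delta>(0) = -1\<close>, \<open>\<Delta>(1) = 1\<close> and
  \<open>F\<close> is reciprocal, there are real zeros \<open>a\<close> and \<open>1/a\<close> in \<open>(0,1)\<close> and \<open>(1,\<infinity>)\<close>. These
  \<open>m+n+1\<close> distinct zeros exhaust the degree, so they are all the zeros and all are simple.\<close>

section \<open>The fraction q/p of r(m,n)\<close>

lemma cfrac_replicate_two:
  assumes "cfrac L = 1 - 1/y" "y > 0"
  shows "cfrac (replicate k 2 @ L) = 1 - 1/(y + of_nat k)"
proof (induction k)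
  case 0 then show ?case using assms by simp
next
  case (Suc k)
  have pos: "y + of_nat k > 0" using assms by (simp add: add_pos_nonneg)
  have "cfrac (replicate (Suc k) 2 @ L) = 1 / (2 - (1 - 1/(y + of_nat k)))"
    using Suc by simp
  also have "\<dots> = 1 - 1/(y + of_nat (Suc k))"
    using pos by (simp add: field_simps)
  finally show ?case .
qed

definition r_den :: "nat \<Rightarrow> nat \<Rightarrow> nat" where
  "r_den m n = m*(4*n+3) + 3*n+2"

lemma cfrac_r_mn:
  "cfrac (r_mn m n) = 1 - of_nat (4*n+3) / of_nat (r_den m n)"
proof -
  have tail: "cfrac (replicate n 2) = of_nat n / (1 + of_nat n)"
    using cfrac_replicate_two[of "[]" 1 n] by (simp add: field_simps)
  have pos: "(1 + rat_of_nat n) > 0" "rat_of_nat (3*n+2) > 0" "rat_of_nat (4*n+3) > 0"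
    by simp_all
  have "- 2 - of_nat n / (1 + rat_of_nat n) = - (of_nat (3*n+2)) / (1 + of_nat n)"
    using pos by (simp add: field_simps)
  then have "cfrac ([-2] @ replicate n 2) = 1 - 1/(of_nat (3*n+2) / of_nat (4*n+3))"
    using pos by (simp add: tail field_simps)
  then have "cfrac (r_mn m n) = 1 - 1/(of_nat (3*n+2) / of_nat (4*n+3) + of_nat m)"
    unfolding r_mn_def using cfrac_replicate_two[of _ _ m] by simp
  also have "\<dots> = 1 - of_nat (4*n+3) / of_nat (r_den m n)"
    unfolding r_den_def by (simp add: field_simps)
  finally show ?thesis .
qed

lemma quotient_of_of_int_div:
  assumes "b > 0" "coprime a b"
  shows "quotient_of (of_int a / of_int b) = (a, b)"
proof -
  have "of_int a / of_int b = Fract (fst (a,b)) (snd (a,b)) \<and> snd (a,b) > 0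
          \<and> coprime (fst (a,b)) (snd (a,b))"
    using assms by (simp add: Fract_of_int_quotient)
  then show ?thesis unfolding quotient_of_def
    by (rule the1_equality[OF quotient_of_unique])
qed

lemma quotient_of_cfrac_r_mn:
  "quotient_of (cfrac (r_mn m n)) = (int (r_den m n) - int (4*n+3), int (r_den m n))"
proof -
  define p where "p = int (r_den m n)"
  define q where "q = p - int (4*n+3)"
  have "p > 0" unfolding p_def r_den_def by (simp only: of_nat_0_less_iff)
  have cfrac_eq: "cfrac (r_mn m n) = of_int q / of_int p"
    unfolding cfrac_r_mn q_def p_def using \<open>p > 0\<close>[unfolded p_def]
    by (simp add: field_simps)
  have "coprime q p"
  proof (rule coprimeI)
    fix d assume "d dvd q" "d dvd p"
    then have "d dvd (4 * int m - 1) * p - (4 * int m + 3) * q" by simp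
    moreover have "(4 * int m - 1) * p - (4 * int m + 3) * q = 1"
      unfolding q_def p_def r_den_def by (simp add: algebra_simps)
    ultimately show "is_unit d" by simp
  qed
  then have "quotient_of (of_int q / of_int p) = (q, p)"
    by (rule quotient_of_of_int_div[OF \<open>p > 0\<close>])
  then show ?thesis using cfrac_eq by (simp only: p_def q_def)
qed


section \<open>The Hartley--Minkus sequence for r(m,n)\<close>

text \<open>With \<open>p = r_den m n\<close> and \<open>q = p - (4n+3)\<close> even, the formula uses \<open>q' = q + p\<close>.
  The partial sums \<open>sigma_sum\<close> form a zigzag: down \<open>m\<close> steps from 0, then \<open>n\<close> blocks of
  runs of lengths \<open>m+1, m+1, m, m+1\<close> (up, down, up, down), each ending one lower than
  it started, then a final rise of \<open>m+1\<close> and descent of \<open>m\<close>.\<close>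

definition sigma_step :: "nat \<Rightarrow> nat \<Rightarrow> nat \<Rightarrow> int" where
  "sigma_step m n j =
     (if even ((int j * ((int (r_den m n) - int (4*n+3)) + int (r_den m n))) div int (r_den m n))
      then 1 else -1)"

definition sigma_sum :: "nat \<Rightarrow> nat \<Rightarrow> nat \<Rightarrow> int" where
  "sigma_sum m n i = (\<Sum>j\<in>{1..i}. sigma_step m n j)"

definition block_start :: "nat \<Rightarrow> nat \<Rightarrow> nat" where
  "block_start m a = m + a * (4*m+3)"

lemma sigma_step_eq:
  assumes "k * r_den m n < j * (4*n+3)" "j * (4*n+3) < (k+1) * r_den m n"
  shows "sigma_step m n j = (if odd k then 1 else -1)"
proof -
  define P where "P = int (r_den m n)"
  define c where "c = int (4*n+3)"
  have lo: "int k * P < int j * c" and hi: "int j * c < (int k + 1) * P"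
  proof -
    have "int (k * r_den m n) < int (j * (4*n+3))" "int (j * (4*n+3)) < int ((k+1) * r_den m n)"
      using assms by (simp_all only: of_nat_less_iff)
    then show "int k * P < int j * c" "int j * c < (int k + 1) * P"
      unfolding P_def c_def by (simp_all add: algebra_simps)
  qed
  have "int j * ((P - c) + P) div P = 2 * int j - int k - 1"
    by (rule int_div_pos_eq[where r = "(int k + 1) * P - int j * c"]) (use lo hi in \<open>simp_all add: algebra_simps\<close>)
  then show ?thesis unfolding sigma_step_def P_def[symmetric] c_def[symmetric]
    by simp
qed

lemma sigma_step_const:
  assumes "k * r_den m n + 1 \<le> J0 * (4*n+3)" "J1 * (4*n+3) + 1 \<le> (k+1) * r_den m n"
    and "J0 \<le> j" "j \<le> J1"
  shows "sigma_step m n j = (if odd k then 1 else -1)"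
proof (rule sigma_step_eq)
  have "J0 * (4*n+3) \<le> j * (4*n+3)" using assms(3) by (rule mult_le_mono1)
  then show "k * r_den m n < j * (4 * n + 3)" using assms(1) by linarith
  have "j * (4*n+3) \<le> J1 * (4*n+3)" using assms(4) by (rule mult_le_mono1)
  then show "j * (4 * n + 3) < (k + 1) * r_den m n" using assms(2) by linarith
qed

lemma sigma_sum_Suc: "sigma_sum m n (Suc i) = sigma_sum m n i + sigma_step m n (Suc i)"
  unfolding sigma_sum_def by simp

lemma sigma_sum_run:
  assumes "\<And>l. 1 \<le> l \<Longrightarrow> l \<le> L \<Longrightarrow> sigma_step m n (b + l) = e"
  shows "l \<le> L \<Longrightarrow> sigma_sum m n (b + l) = sigma_sum m n b + e * int l"
proof (induction l)
  case 0 then show ?case by simp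
next
  case (Suc l)
  then have "sigma_sum m n (b + Suc l) = sigma_sum m n (b + l) + sigma_step m n (b + Suc l)"
    using sigma_sum_Suc[of m n "b+l"] by simp
  also have "sigma_step m n (b + Suc l) = e" using assms[of "Suc l"] Suc by simp
  finally show ?case using Suc by (simp add: algebra_simps)
qed

lemma sigma_step_initial: "1 \<le> j \<Longrightarrow> j \<le> m \<Longrightarrow> sigma_step m n j = -1"
  using sigma_step_const[of 0 m n 1 m j] by (simp add: r_den_def)

lemma sigma_step_block_up1:
  assumes "a \<le> n" "1 \<le> l" "l \<le> m+1"
  shows "sigma_step m n (block_start m a + l) = 1"
proof -
  obtain d where d: "n = a + d" using assms(1) le_Suc_ex by blast
  have "sigma_step m n (block_start m a + l) = (if odd (4*a+1) then 1 else -1)"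
    by (rule sigma_step_const[of _ _ _ "block_start m a + 1" "block_start m a + m + 1"])
       (use assms in \<open>auto simp: d r_den_def block_start_def algebra_simps\<close>)
  then show ?thesis by simp
qed

lemma sigma_step_block_down1:
  assumes "a < n" "1 \<le> l" "l \<le> m+1"
  shows "sigma_step m n (block_start m a + (m+1) + l) = -1"
proof -
  obtain d where d: "n = a + d + 1" using assms(1) less_imp_Suc_add by fastforce
  have "sigma_step m n (block_start m a + (m+1) + l) = (if odd (4*a+2) then 1 else -1)"
    by (rule sigma_step_const[of _ _ _ "block_start m a + m + 2" "block_start m a + 2*m + 2"])
       (use assms in \<open>auto simp: d r_den_def block_start_def algebra_simps\<close>)
  then show ?thesis by simp
qed

lemma sigma_step_block_up2:
  assumes "a < n" "1 \<le> l" "l \<le> m"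
  shows "sigma_step m n (block_start m a + (2*m+2) + l) = 1"
proof -
  obtain d where d: "n = a + d + 1" using assms(1) less_imp_Suc_add by fastforce
  have "sigma_step m n (block_start m a + (2*m+2) + l) = (if odd (4*a+3) then 1 else -1)"
    by (rule sigma_step_const[of _ _ _ "block_start m a + 2*m + 3" "block_start m a + 3*m + 2"])
       (use assms in \<open>auto simp: d r_den_def block_start_def algebra_simps\<close>)
  then show ?thesis by simp
qed

lemma sigma_step_block_down2:
  assumes "a < n" "1 \<le> l" "l \<le> m+1"
  shows "sigma_step m n (block_start m a + (3*m+2) + l) = -1"
proof -
  obtain d where d: "n = a + d + 1" using assms(1) less_imp_Suc_add by fastforce
  have "sigma_step m n (block_start m a + (3*m+2) + l) = (if odd (4*a+4) then 1 else -1)"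
    by (rule sigma_step_const[of _ _ _ "block_start m a + 3*m + 3" "block_start m a + 4*m + 3"])
       (use assms in \<open>auto simp: d r_den_def block_start_def algebra_simps\<close>)
  then show ?thesis by simp
qed

lemma sigma_step_final_down:
  assumes "1 \<le> l" "l \<le> m"
  shows "sigma_step m n (block_start m n + (m+1) + l) = -1"
proof -
  have "sigma_step m n (block_start m n + (m+1) + l) = (if odd (4*n+2) then 1 else -1)"
    by (rule sigma_step_const[of _ _ _ "block_start m n + m + 2" "block_start m n + 2*m + 1"])
       (use assms in \<open>auto simp: r_den_def block_start_def algebra_simps\<close>)
  then show ?thesis by simp
qed

lemma sigma_sum_initial: "l \<le> m \<Longrightarrow> sigma_sum m n l = - int l"
  using sigma_sum_run[of m m n 0 "-1" l] sigma_step_initial[of _ m n]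
  by (simp add: sigma_sum_def)

lemma sigma_sum_block:
  assumes "a < n" "sigma_sum m n (block_start m a) = - int m - int a"
  shows "l \<le> m+1 \<Longrightarrow> sigma_sum m n (block_start m a + l) = - int m - int a + int l"
    and "l \<le> m+1 \<Longrightarrow> sigma_sum m n (block_start m a + (m+1) + l) = 1 - int a - int l"
    and "l \<le> m \<Longrightarrow> sigma_sum m n (block_start m a + (2*m+2) + l) = - int m - int a + int l"
    and "l \<le> m+1 \<Longrightarrow> sigma_sum m n (block_start m a + (3*m+2) + l) = - int a - int l"
proof -
  let ?b = "block_start m a"
  have r1: "sigma_sum m n (?b + l) = - int m - int a + int l" if "l \<le> m+1" for l
    using sigma_sum_run[of "m+1" m n ?b 1 l] sigma_step_block_up1[of a n _ m] assms that by simp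
  then show "l \<le> m+1 \<Longrightarrow> sigma_sum m n (?b + l) = - int m - int a + int l" .
  have r2: "sigma_sum m n (?b + (m+1) + l) = 1 - int a - int l" if "l \<le> m+1" for l
    using sigma_sum_run[of "m+1" m n "?b + (m+1)" "-1" l] sigma_step_block_down1[of a n _ m]
      assms that r1[of "m+1"] by simp
  then show "l \<le> m+1 \<Longrightarrow> sigma_sum m n (?b + (m+1) + l) = 1 - int a - int l" .
  have s2: "sigma_sum m n (?b + (2*m+2)) = - int m - int a"
    using r2[of "m+1"] by (simp add: add.assoc mult_2)
  have r3: "sigma_sum m n (?b + (2*m+2) + l) = - int m - int a + int l" if "l \<le> m" for l
    using sigma_sum_run[of m m n "?b + (2*m+2)" 1 l] sigma_step_block_up2[of a n _ m]
      assms that s2 by simp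
  then show "l \<le> m \<Longrightarrow> sigma_sum m n (?b + (2*m+2) + l) = - int m - int a + int l" .
  have s3: "sigma_sum m n (?b + (3*m+2)) = - int a"
    using r3[of m] by (simp add: add.assoc)
  show "l \<le> m+1 \<Longrightarrow> sigma_sum m n (?b + (3*m+2) + l) = - int a - int l"
    using sigma_sum_run[of "m+1" m n "?b + (3*m+2)" "-1" l] sigma_step_block_down2[of a n _ m]
      assms s3 by simp
qed

lemma block_start_Suc: "block_start m (Suc a) = block_start m a + (3*m+2) + (m+1)"
  unfolding block_start_def by simp

lemma sigma_sum_block_start: "a \<le> n \<Longrightarrow> sigma_sum m n (block_start m a) = - int m - int a"
proof (induction a)
  case 0 then show ?case using sigma_sum_initial[of m m n] by (simp add: block_start_def)
next
  case (Suc a)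
  then have "a < n" by simp
  from sigma_sum_block(4)[OF this Suc.IH[OF less_imp_le[OF this]], of "m+1"]
  show ?case unfolding block_start_Suc by simp
qed

lemma sigma_sum_final:
  shows "l \<le> m+1 \<Longrightarrow> sigma_sum m n (block_start m n + l) = - int m - int n + int l"
    and "l \<le> m \<Longrightarrow> sigma_sum m n (block_start m n + (m+1) + l) = 1 - int n - int l"
proof -
  let ?b = "block_start m n"
  have r1: "sigma_sum m n (?b + l) = - int m - int n + int l" if "l \<le> m+1" for l
    using sigma_sum_run[of "m+1" m n ?b 1 l] sigma_step_block_up1[of n n _ m]
      sigma_sum_block_start[of n n m] that by simp
  then show "l \<le> m+1 \<Longrightarrow> sigma_sum m n (?b + l) = - int m - int n + int l" .
  show "l \<le> m \<Longrightarrow> sigma_sum m n (?b + (m+1) + l) = 1 - int n - int l"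
    using sigma_sum_run[of m m n "?b + (m+1)" "-1" l] sigma_step_final_down[of _ m n]
      r1[of "m+1"] by simp
qed

lemma sigma_sum_lower_block:
  "a \<le> n \<Longrightarrow> i \<le> block_start m a \<Longrightarrow> sigma_sum m n i \<ge> - int m - int a"
proof (induction a arbitrary: i)
  case 0 then show ?case using sigma_sum_initial[of i m n] by (simp add: block_start_def)
next
  case (Suc a)
  then have an: "a < n" by simp
  note block = sigma_sum_block[OF an sigma_sum_block_start[OF less_imp_le[OF an]]]
  show ?case
  proof (cases "i \<le> block_start m a")
    case True then show ?thesis using Suc.IH[of i] an by simp
  next
    case False
    then obtain l where l: "i = block_start m a + l" "l \<le> 4*m+3"
      using Suc.prems(2) unfolding block_start_Suc by (intro that[of "i - block_start m a"]) auto
    consider "l \<le> m+1" | "m+1 < l" "l \<le> 2*m+2" | "2*m+2 < l" "l \<le> 3*m+2" | "3*m+2 < l"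
      by linarith
    then show ?thesis
    proof cases
      case 1 then show ?thesis using block(1) l by simp
    next
      case 2
      then obtain l' where "l = (m+1) + l'" "l' \<le> m+1" by (intro that[of "l - (m+1)"]) auto
      then show ?thesis using block(2) l by (simp add: add.assoc)
    next
      case 3
      then obtain l' where "l = (2*m+2) + l'" "l' \<le> m" by (intro that[of "l - (2*m+2)"]) auto
      then show ?thesis using block(3) l by (simp add: add.assoc)
    next
      case 4
      then obtain l' where "l = (3*m+2) + l'" "l' \<le> m+1"
        using l(2) by (intro that[of "l - (3*m+2)"]) auto
      then show ?thesis using block(4) l by (simp add: add.assoc)
    qed
  qed
qed

lemma r_den_eq_block_start: "r_den m n = block_start m n + (m+1) + m + 1"
  unfolding r_den_def block_start_def by (simp add: algebra_simps)

lemma sigma_sum_lower: "i < r_den m n \<Longrightarrow> sigma_sum m n i \<ge> - int m - int n"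
proof (cases "i \<le> block_start m n")
  case True then show ?thesis using sigma_sum_lower_block[of n n i m] by simp
next
  case False
  assume "i < r_den m n"
  then obtain l where l: "i = block_start m n + l" "l \<le> 2*m+1"
    using False unfolding r_den_eq_block_start by (intro that[of "i - block_start m n"]) auto
  show ?thesis
  proof (cases "l \<le> m+1")
    case True then show ?thesis using sigma_sum_final(1) l by simp
  next
    case False
    then obtain l' where "l = (m+1) + l'" "l' \<le> m" using l(2) by (intro that[of "l - (m+1)"]) auto
    then show ?thesis using sigma_sum_final(2) l by (simp add: add.assoc)
  qed
qed

lemma Min_sigma_sum: "Min (sigma_sum m n ` {..<r_den m n}) = - int m - int n"
proof (rule Min_eqI)
  show "finite (sigma_sum m n ` {..<r_den m n})" by simp
  show "\<And>y. y \<in> sigma_sum m n ` {..<r_den m n} \<Longrightarrow> - int m - int n \<le> y"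
    using sigma_sum_lower by auto
  have "block_start m n < r_den m n" unfolding r_den_eq_block_start by simp
  then show "- int m - int n \<in> sigma_sum m n ` {..<r_den m n}"
    using sigma_sum_block_start[of n n m] by force
qed

lemma minkus_sigma_r_mn:
  assumes "odd (m+n)"
  shows "minkus_sigma (int (r_den m n)) (int (r_den m n) - int (4*n+3)) = sigma_sum m n"
proof
  fix i
  have "odd (r_den m n)" using assms unfolding r_den_def by (auto simp: even_add even_mult_iff)
  then have "even (int (r_den m n) - int (4*n+3))" by simp
  then show "minkus_sigma (int (r_den m n)) (int (r_den m n) - int (4*n+3)) i = sigma_sum m n i"
    unfolding minkus_sigma_def sigma_sum_def sigma_step_def Let_def by simp
qed

definition alex_exp :: "nat \<Rightarrow> nat \<Rightarrow> nat \<Rightarrow> nat" where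
  "alex_exp m n i = nat (sigma_sum m n i + int m + int n)"

lemma alex_K_r_mn:
  assumes "odd (m+n)"
  shows "alex_K (cfrac (r_mn m n)) = (\<Sum>i<r_den m n. monom ((-1)^i) (alex_exp m n i))"
  unfolding alex_K_def quotient_of_cfrac_r_mn alex_exp_def
  by (simp only: alex_2bridge_def Let_def minkus_sigma_r_mn[OF assms] nat_int Min_sigma_sum
      prod.case) (simp add: algebra_simps)

section \<open>Telescoping the Alexander polynomial\<close>

lemma map_poly_of_int_sum_monom:
  "map_poly (of_int :: int \<Rightarrow> 'a::comm_ring_1) (\<Sum>i\<in>A. monom (c i) (k i))
     = (\<Sum>i\<in>A. monom (of_int (c i)) (k i))"
  by (rule poly_eqI)
     (simp add: coeff_map_poly coeff_sum of_int_sum coeff_monom if_distrib cong: if_cong)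

lemma poly_alex_K_r_mn:
  fixes x :: "'a::comm_ring_1"
  assumes "odd (m+n)"
  shows "poly (map_poly of_int (alex_K (cfrac (r_mn m n)))) x
           = (\<Sum>i<r_den m n. (-1)^i * x^(alex_exp m n i))"
  unfolding alex_K_r_mn[OF assms] map_poly_of_int_sum_monom poly_sum poly_monom
  by (simp add: algebra_simps)

lemma alternating_sum_run_up:
  fixes x :: "'a::comm_ring_1"
  assumes "\<And>l. l \<le> L \<Longrightarrow> w (b+l) = s + l"
  shows "(1+x) * (\<Sum>i\<in>{b<..b+L}. (-1)^i * x^(w i))
           = (-1)^(b+1) * x^(s+1) + (-1)^(b+L) * x^(s+L+1)"
  using assms
proof (induction L)
  case 0 then show ?case by simp
next
  case (Suc L)
  have "{b<..b + Suc L} = insert (b + Suc L) {b<..b+L}" by auto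
  then have "(1+x) * (\<Sum>i\<in>{b<..b+Suc L}. (-1)^i * x^(w i))
      = (1+x) * ((-1)^(b+Suc L) * x^(s + Suc L)) + (1+x) * (\<Sum>i\<in>{b<..b+L}. (-1)^i * x^(w i))"
    using Suc.prems[of "Suc L"] by (simp add: algebra_simps)
  also have "\<dots> = (-1)^(b+1) * x^(s+1) + (-1)^(b+Suc L) * x^(s+Suc L+1)"
    using Suc by (simp add: algebra_simps)
  finally show ?case .
qed

lemma alternating_sum_run_down:
  fixes x :: "'a::comm_ring_1"
  assumes "\<And>l. l \<le> L \<Longrightarrow> w (b+l) + l = s"
  shows "(1+x) * (\<Sum>i\<in>{b<..b+L}. (-1)^i * x^(w i))
           = (-1)^(b+1) * x^s + (-1)^(b+L) * x^(s-L)"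
  using assms
proof (induction L)
  case 0 then show ?case by simp
next
  case (Suc L)
  have w: "w (b + Suc L) = s - Suc L" "s \<ge> Suc L" using Suc.prems[of "Suc L"] by auto
  have "{b<..b + Suc L} = insert (b + Suc L) {b<..b+L}" by auto
  then have "(1+x) * (\<Sum>i\<in>{b<..b+Suc L}. (-1)^i * x^(w i))
      = (1+x) * ((-1)^(b+Suc L) * x^(s - Suc L)) + (1+x) * (\<Sum>i\<in>{b<..b+L}. (-1)^i * x^(w i))"
    using w by (simp add: algebra_simps)
  also have "\<dots> = (1+x) * ((-1)^(b+Suc L) * x^(s - Suc L))
                  + ((-1)^(b+1) * x^s + (-1)^(b+L) * (x * x^(s - Suc L)))"
    using Suc w(2) by (simp add: Suc_diff_Suc flip: power_Suc)
  also have "\<dots> = (-1)^(b+1) * x^s + (-1)^(b+Suc L) * x^(s-Suc L)"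
    by (simp add: algebra_simps)
  finally show ?case .
qed

lemma sum_greaterThanAtMost_split:
  fixes b :: nat
  assumes "c = b + k"
  shows "(\<Sum>i\<in>{b<..b+(k+l)}. f i) = (\<Sum>i\<in>{b<..b+k}. f i) + (\<Sum>i\<in>{c<..c+l}. f i)"
proof -
  have "{b<..b+(k+l)} = {b<..b+k} \<union> {c<..c+l}"
    using ivl_disj_un_two(6)[of b "b+k" "b+k+l"] assms by (simp add: add.assoc)
  moreover have "{b<..b+k} \<inter> {c<..c+l} = {}" using assms by auto
  ultimately show ?thesis by (simp add: sum.union_disjoint)
qed

lemma alex_exp_initial: "l \<le> m \<Longrightarrow> alex_exp m n (0 + l) + l = m + n"
  unfolding alex_exp_def using sigma_sum_initial[of l m n] by simp

lemma alex_exp_block: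
  assumes "a < n"
  shows "l \<le> m+1 \<Longrightarrow> alex_exp m n (block_start m a + l) = (n - a) + l"
    and "l \<le> m+1 \<Longrightarrow> alex_exp m n (block_start m a + (m+1) + l) + l = (n - a) + m + 1"
    and "l \<le> m \<Longrightarrow> alex_exp m n (block_start m a + (2*m+2) + l) = (n - a) + l"
    and "l \<le> m+1 \<Longrightarrow> alex_exp m n (block_start m a + (3*m+2) + l) + l = (n - a) + m"
  using sigma_sum_block[OF assms sigma_sum_block_start[OF less_imp_le[OF assms]]] assms
  unfolding alex_exp_def by (simp_all add: nat_eq_iff)

lemma alex_exp_final:
  shows "l \<le> m+1 \<Longrightarrow> alex_exp m n (block_start m n + l) = 0 + l"
    and "l \<le> m \<Longrightarrow> alex_exp m n (block_start m n + (m+1) + l) + l = m + 1"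
  unfolding alex_exp_def using sigma_sum_final by (simp_all add: nat_eq_iff)

lemma minus_one_power_block_start:
  "(-1::'a::comm_ring_1)^(block_start m a + k) = (-1)^m * (-1)^a * (-1)^k"
  unfolding block_start_def by (simp add: minus_one_power_iff even_add even_mult_iff)

definition block_factor :: "nat \<Rightarrow> 'a::comm_ring_1 \<Rightarrow> 'a" where
  "block_factor m x = (-1)^m*(x - 2*x^2 - 1) - x^(m+1) + 2*x^(m+2) - x^(m+3)"

lemma block_sum:
  fixes x :: "'a::comm_ring_1"
  assumes "a < n"
  shows "(1+x) * (\<Sum>i\<in>{block_start m a<..block_start m a + (4*m+3)}. (-1)^i * x^(alex_exp m n i))
           = (-1)^a * x^(n-a-1) * block_factor m x"
proof -
  define b where "b = block_start m a"
  define F where "F i = (-1)^i * x^(alex_exp m n i)" for i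
  obtain u where u: "n - a = u + 1" using assms by (metis Suc_diff_Suc Suc_eq_plus1)
  have "4*m+3 = (m+1) + ((m+1) + (m + (m+1)))" by simp
  then have split: "(\<Sum>i\<in>{b<..b + (4*m+3)}. F i) = (\<Sum>i\<in>{b<..b+(m+1)}. F i)
      + (\<Sum>i\<in>{b+(m+1)<..b+(m+1)+(m+1)}. F i) + (\<Sum>i\<in>{b+(2*m+2)<..b+(2*m+2)+m}. F i)
      + (\<Sum>i\<in>{b+(3*m+2)<..b+(3*m+2)+(m+1)}. F i)"
    by (simp only: sum_greaterThanAtMost_split[of "b+(m+1)"]
        sum_greaterThanAtMost_split[of "b+(2*m+2)"] sum_greaterThanAtMost_split[of "b+(3*m+2)"])
      (simp_all add: algebra_simps)
  have R1: "(1+x) * (\<Sum>i\<in>{b<..b+(m+1)}. F i)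
      = (-1)^(b+1) * x^((n-a)+1) + (-1)^(b+(m+1)) * x^((n-a)+(m+1)+1)"
    unfolding F_def by (rule alternating_sum_run_up) (use alex_exp_block(1)[OF assms] in \<open>simp add: b_def\<close>)
  have R2: "(1+x) * (\<Sum>i\<in>{b+(m+1)<..b+(m+1)+(m+1)}. F i)
      = (-1)^(b+(m+1)+1) * x^((n-a)+m+1) + (-1)^(b+(m+1)+(m+1)) * x^((n-a)+m+1-(m+1))"
    unfolding F_def by (rule alternating_sum_run_down) (use alex_exp_block(2)[OF assms] in \<open>simp add: b_def\<close>)
  have R3: "(1+x) * (\<Sum>i\<in>{b+(2*m+2)<..b+(2*m+2)+m}. F i)
      = (-1)^(b+(2*m+2)+1) * x^((n-a)+1) + (-1)^(b+(2*m+2)+m) * x^((n-a)+m+1)"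
    unfolding F_def by (rule alternating_sum_run_up) (use alex_exp_block(3)[OF assms] in \<open>simp add: b_def\<close>)
  have R4: "(1+x) * (\<Sum>i\<in>{b+(3*m+2)<..b+(3*m+2)+(m+1)}. F i)
      = (-1)^(b+(3*m+2)+1) * x^((n-a)+m) + (-1)^(b+(3*m+2)+(m+1)) * x^((n-a)+m-(m+1))"
    unfolding F_def by (rule alternating_sum_run_down) (use alex_exp_block(4)[OF assms] in \<open>simp add: b_def\<close>)
  show ?thesis
    unfolding F_def[symmetric] b_def[symmetric] split distrib_left R1 R2 R3 R4 u
    unfolding b_def add.assoc minus_one_power_block_start block_factor_def
    by (cases "even m") (simp_all add: power_add power2_eq_square power3_eq_cube algebra_simps)
qed

lemma sum_over_blocks:
  "(\<Sum>i\<in>{0<..block_start m k}. f i)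
     = (\<Sum>i\<in>{0<..m}. f i) + (\<Sum>a<k. \<Sum>i\<in>{block_start m a<..block_start m a + (4*m+3)}. f i)"
proof (induction k)
  case 0 then show ?case by (simp add: block_start_def)
next
  case (Suc k)
  have "block_start m (Suc k) = 0 + (block_start m k + (4*m+3))"
    unfolding block_start_def by simp
  then have "(\<Sum>i\<in>{0<..block_start m (Suc k)}. f i)
      = (\<Sum>i\<in>{0<..0 + block_start m k}. f i)
        + (\<Sum>i\<in>{block_start m k<..block_start m k + (4*m+3)}. f i)"
    by (simp only: sum_greaterThanAtMost_split[of "block_start m k"])
  then show ?case using Suc by (simp add: add.assoc)
qed

lemma alternating_geometric_sum:
  fixes x :: "'a::comm_ring_1"
  shows "k \<le> n \<Longrightarrow> (1+x) * (\<Sum>a<k. (-1)^a * x^(n-a-1)) = x^n - (-1)^k * x^(n-k)"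
proof (induction k)
  case 0 then show ?case by simp
next
  case (Suc k)
  obtain v where v: "n - k = Suc v" using Suc.prems by (metis Suc_diff_Suc Suc_le_lessD)
  then have "n - k - 1 = v" "n - Suc k = v" by simp_all
  then show ?case using Suc v unfolding sum.lessThan_Suc by (simp add: algebra_simps)
qed

definition alex_numerator :: "nat \<Rightarrow> nat \<Rightarrow> 'a::comm_ring_1 \<Rightarrow> 'a" where
  "alex_numerator m n x = -1 + 3*x + 2*(-1)^m*x^(n+1) - 2*(-1)^m*x^(n+2)
     - x^(m+n+3) + 3*x^(m+n+2) + 2*(-1)^m*x^(m+2) - 2*(-1)^m*x^(m+1)"

lemma sum_lessThan_r_den_split:
  "(\<Sum>i<r_den m n. f i) = f 0 + (\<Sum>i\<in>{0<..m}. f i)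
     + (\<Sum>a<n. \<Sum>i\<in>{block_start m a<..block_start m a + (4*m+3)}. f i)
     + (\<Sum>i\<in>{block_start m n<..block_start m n+(m+1)}. f i)
     + (\<Sum>i\<in>{block_start m n+(m+1)<..block_start m n+(m+1)+m}. f i)"
proof -
  let ?B = "block_start m n"
  have "{..<r_den m n} = insert 0 {0<..0+(?B+((m+1)+m))}"
    unfolding r_den_eq_block_start by auto
  then have "(\<Sum>i<r_den m n. f i) = f 0 + (\<Sum>i\<in>{0<..0+(?B+((m+1)+m))}. f i)"
    by simp
  also have "(\<Sum>i\<in>{0<..0+(?B+((m+1)+m))}. f i)
      = (\<Sum>i\<in>{0<..?B}. f i) + (\<Sum>i\<in>{?B<..?B+(m+1)}. f i) + (\<Sum>i\<in>{?B+(m+1)<..?B+(m+1)+m}. f i)"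
    by (simp only: sum_greaterThanAtMost_split[of ?B] sum_greaterThanAtMost_split[of "?B+(m+1)"])
      (simp_all add: add.assoc)
  finally show ?thesis unfolding sum_over_blocks by (simp only: add.assoc)
qed

lemma all_blocks_sum:
  fixes x :: "'a::comm_ring_1"
  shows "(1+x)^2 * (\<Sum>a<n. \<Sum>i\<in>{block_start m a<..block_start m a + (4*m+3)}. (-1)^i * x^(alex_exp m n i))
           = block_factor m x * (x^n - (-1)^n)"
proof -
  define G where
    "G a = (\<Sum>i\<in>{block_start m a<..block_start m a + (4*m+3)}. (-1)^i * x^(alex_exp m n i))" for a
  have "(1+x) * (\<Sum>a<n. G a) = block_factor m x * (\<Sum>a<n. (-1)^a * x^(n-a-1))"
    unfolding sum_distrib_left
  proof (rule sum.cong)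
    fix a assume "a \<in> {..<n}"
    then show "(1+x) * G a = block_factor m x * ((-1)^a * x^(n-a-1))"
      using block_sum[of a n x m] unfolding G_def by (simp only: lessThan_iff mult_ac)
  qed simp
  then show ?thesis
    using alternating_geometric_sum[of n n x] unfolding G_def[symmetric]
    by (simp add: power2_eq_square mult.assoc mult.left_commute[of "1+x"])
qed

lemma alex_K_r_mn_times_square:
  fixes x :: "'a::comm_ring_1"
  assumes odd: "odd (m+n)"
  shows "(1+x)^2 * poly (map_poly of_int (alex_K (cfrac (r_mn m n)))) x = alex_numerator m n x"
proof -
  define F where "F i = (-1)^i * x^(alex_exp m n i)" for i
  define B where "B = block_start m n"
  have F0: "F 0 = x^(m+n)"
    unfolding F_def alex_exp_def sigma_sum_def by (simp flip: of_nat_add)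
  have R0: "(1+x) * (\<Sum>i\<in>{0<..0+m}. F i) = (-1)^(0+1) * x^(m+n) + (-1)^(0+m) * x^(m+n-m)"
    unfolding F_def by (rule alternating_sum_run_down) (use alex_exp_initial in auto)
  have R1: "(1+x) * (\<Sum>i\<in>{B<..B+(m+1)}. F i)
      = (-1)^(B+1) * x^(0+1) + (-1)^(B+(m+1)) * x^(0+(m+1)+1)"
    unfolding F_def by (rule alternating_sum_run_up) (use alex_exp_final(1) in \<open>simp add: B_def\<close>)
  have R2: "(1+x) * (\<Sum>i\<in>{B+(m+1)<..B+(m+1)+m}. F i)
      = (-1)^(B+(m+1)+1) * x^(m+1) + (-1)^(B+(m+1)+m) * x^(m+1-m)"
    unfolding F_def by (rule alternating_sum_run_down) (use alex_exp_final(2) in \<open>simp add: B_def\<close>)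
  define G where "G a = (\<Sum>i\<in>{block_start m a<..block_start m a + (4*m+3)}. F i)" for a
  have RB: "(1+x)^2 * (\<Sum>a<n. G a) = block_factor m x * (x^n - (-1)^n)"
    unfolding G_def F_def by (rule all_blocks_sum)
  have "(1+x)^2 * (\<Sum>i<r_den m n. F i)
      = (1+x) * ((1+x) * F 0 + (1+x) * (\<Sum>i\<in>{0<..0+m}. F i) + (1+x) * (\<Sum>i\<in>{B<..B+(m+1)}. F i)
          + (1+x) * (\<Sum>i\<in>{B+(m+1)<..B+(m+1)+m}. F i)) + (1+x)^2 * (\<Sum>a<n. G a)"
    unfolding sum_lessThan_r_den_split G_def[symmetric] B_def[symmetric]
    by (simp add: power2_eq_square algebra_simps)
  also have "\<dots> = alex_numerator m n x"
  proof -
    have "(-1::'a)^n = -((-1)^m)" using odd by (auto simp: minus_one_power_iff)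
    then show ?thesis
      unfolding R0 R1 R2 RB F0 unfolding B_def add.assoc minus_one_power_block_start
        alex_numerator_def block_factor_def
      by (cases "even m") (simp_all add: power_add power2_eq_square power3_eq_cube algebra_simps)
  qed
  finally show ?thesis unfolding poly_alex_K_r_mn[OF odd] F_def .
qed

definition alex_numerator_poly :: "nat \<Rightarrow> nat \<Rightarrow> int poly" where
  "alex_numerator_poly m n = monom (-1) 0 + monom 3 1 + monom (2*(-1)^m) (n+1)
     + monom (-2*(-1)^m) (n+2) + monom (-1) (m+n+3) + monom 3 (m+n+2)
     + monom (2*(-1)^m) (m+2) + monom (-2*(-1)^m) (m+1)"

lemma poly_alex_numerator_poly: "poly (alex_numerator_poly m n) x = alex_numerator m n x"
  unfolding alex_numerator_poly_def alex_numerator_def by (simp add: poly_monom algebra_simps)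

lemma degree_alex_numerator_poly: "degree (alex_numerator_poly m n) = m+n+3"
proof (rule antisym)
  show "degree (alex_numerator_poly m n) \<le> m+n+3"
    by (rule degree_le) (auto simp: alex_numerator_poly_def coeff_monom)
  show "m+n+3 \<le> degree (alex_numerator_poly m n)"
    by (rule le_degree) (simp add: alex_numerator_poly_def coeff_monom)
qed

lemma alex_K_r_mn_times_square_poly:
  assumes "odd (m+n)"
  shows "alex_K (cfrac (r_mn m n)) * [:1,1:]^2 = alex_numerator_poly m n"
proof -
  have "poly (alex_K (cfrac (r_mn m n)) * [:1,1:]^2) = poly (alex_numerator_poly m n)"
  proof
    fix x :: int
    show "poly (alex_K (cfrac (r_mn m n)) * [:1,1:]^2) x = poly (alex_numerator_poly m n) x"
      using alex_K_r_mn_times_square[OF assms, of x]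
      by (simp add: poly_alex_numerator_poly map_poly_idI algebra_simps)
  qed
  then show ?thesis by (simp add: poly_eq_poly_eq_iff)
qed

lemma degree_alex_K_r_mn:
  assumes "odd (m+n)"
  shows "degree (alex_K (cfrac (r_mn m n))) = m+n+1"
proof -
  note eq = alex_K_r_mn_times_square_poly[OF assms]
  then have "alex_K (cfrac (r_mn m n)) \<noteq> 0" using degree_alex_numerator_poly[of m n] by auto
  then have "degree (alex_numerator_poly m n) = degree (alex_K (cfrac (r_mn m n))) + 2"
    unfolding eq[symmetric] by (simp add: degree_mult_eq degree_power_eq)
  then show ?thesis using degree_alex_numerator_poly[of m n] by simp
qed

lemma alex_numerator_reciprocal:
  fixes x :: "'a::field"
  assumes "x \<noteq> 0"
  shows "alex_numerator m n (inverse x) * x^(m+n+3) = alex_numerator m n x"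
proof -
  have inv: "inverse x ^ k * x^(m+n+3) = x^(m+n+3-k)" if "k \<le> m+n+3" for k
    using assms that by (simp add: power_diff field_simps)
  have "alex_numerator m n (inverse x) * x^(m+n+3) = -(x^(m+n+3))
      + 3 * (inverse x ^ 1 * x^(m+n+3))
      + 2*(-1)^m * (inverse x ^ (n+1) * x^(m+n+3)) - 2*(-1)^m * (inverse x ^ (n+2) * x^(m+n+3))
      - (inverse x ^ (m+n+3) * x^(m+n+3)) + 3 * (inverse x ^ (m+n+2) * x^(m+n+3))
      + 2*(-1)^m * (inverse x ^ (m+2) * x^(m+n+3)) - 2*(-1)^m * (inverse x ^ (m+1) * x^(m+n+3))"
    unfolding alex_numerator_def by (simp add: algebra_simps)
  also have "inverse x ^ 1 * x^(m+n+3) = x^(m+n+2)" using inv[of 1] by simp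
  also have "inverse x ^ (n+1) * x^(m+n+3) = x^(m+2)" using inv[of "n+1"] by simp
  also have "inverse x ^ (n+2) * x^(m+n+3) = x^(m+1)" using inv[of "n+2"] by simp
  also have "inverse x ^ (m+n+3) * x^(m+n+3) = 1" using inv[of "m+n+3"] by simp
  also have "inverse x ^ (m+n+2) * x^(m+n+3) = x" using inv[of "m+n+2"] by simp
  also have "inverse x ^ (m+2) * x^(m+n+3) = x^(n+1)" using inv[of "m+2"] by simp
  also have "inverse x ^ (m+1) * x^(m+n+3) = x^(n+2)" using inv[of "m+1"] by simp
  finally show ?thesis unfolding alex_numerator_def by (simp add: algebra_simps)
qed

section \<open>Zeros on the unit circle\<close>

definition alex_half :: "nat \<Rightarrow> nat \<Rightarrow> complex \<Rightarrow> complex" where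
  "alex_half m n z = -1 + 3*z + 2*(-1)^m*z^(n+1) - 2*(-1)^m*z^(n+2)"

lemma cis_mult_cis_uminus_power: "k \<le> N \<Longrightarrow> cis (real N * t) * cis (-t) ^ k = cis t ^ (N - k)"
  by (simp add: DeMoivre cis_mult of_nat_diff algebra_simps)

text \<open>Behind this: \<open>alex_numerator m n z = B z + z^N * B (1/z)\<close> for \<open>B = alex_half m n\<close>
  and \<open>N = m+n+3\<close>.\<close>

lemma alex_numerator_cis:
  fixes t :: real and m n :: nat
  defines "h \<equiv> real (m+n+3) / 2"
  defines "w \<equiv> cis (-(h*t)) * alex_half m n (cis t)"
  shows "alex_numerator m n (cis t) = cis (h*t) * (w + cnj w)"
proof -
  let ?N = "m+n+3"
  have "cis (h*t) * (w + cnj w)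
      = (cis (h*t) * cis (-(h*t))) * alex_half m n (cis t)
        + (cis (h*t) * cis (h*t)) * cnj (alex_half m n (cis t))"
    unfolding w_def by (simp add: cis_cnj algebra_simps)
  also have "\<dots> = alex_half m n (cis t) + cis (real ?N * t) * cnj (alex_half m n (cis t))"
    unfolding h_def by (simp add: cis_mult algebra_simps)
  also have "cis (real ?N * t) * cnj (alex_half m n (cis t)) =
      - (cis (real ?N * t) * cis (-t)^0) + 3 * (cis (real ?N * t) * cis(-t)^1)
      + 2*(-1)^m*(cis (real ?N * t) * cis(-t)^(n+1)) - 2*(-1)^m*(cis (real ?N * t) * cis(-t)^(n+2))"
    unfolding alex_half_def by (simp add: cis_cnj algebra_simps)
  also have "\<dots> = - ((cis t) ^ ?N) + 3 * (cis t) ^ (m+n+2)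
      + 2*(-1)^m * (cis t) ^ (m+2) - 2*(-1)^m * (cis t)^(m+1)"
    by (simp only: cis_mult_cis_uminus_power) simp
  finally show ?thesis unfolding alex_numerator_def alex_half_def by (simp add: algebra_simps)
qed

lemma alex_numerator_cis_eq_0:
  fixes t :: real
  assumes "Re (cis (-(real (m+n+3) / 2 * t)) * alex_half m n (cis t)) = 0"
  shows "alex_numerator m n (cis t) = 0"
  using assms unfolding alex_numerator_cis[of m n t] complex_add_cnj by simp

definition phase :: "real \<Rightarrow> real" where
  "phase t = arccos ((3*cos t - 1) / sqrt (10 - 6*cos t))"

lemma phase_arccos_arg:
  fixes t :: real
  shows "sqrt (10 - 6*cos t) > 0"
    and "-1 \<le> (3*cos t - 1) / sqrt (10 - 6*cos t)"
    and "(3*cos t - 1) / sqrt (10 - 6*cos t) \<le> 1"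
proof -
  have "10 - 6*cos t > 0" using cos_le_one[of t] by linarith
  then show pos: "sqrt (10 - 6*cos t) > 0" by simp
  have "(cos t)^2 \<le> 1" by (simp add: cos_squared_eq)
  then have "(3*cos t - 1)^2 \<le> 10 - 6*cos t" by (simp add: power2_eq_square algebra_simps)
  then have "sqrt ((3*cos t - 1)^2) \<le> sqrt (10 - 6*cos t)" by (rule real_sqrt_le_mono)
  then have "\<bar>3*cos t - 1\<bar> \<le> sqrt (10 - 6*cos t)" by simp
  then show "-1 \<le> (3*cos t - 1) / sqrt (10 - 6*cos t)" "(3*cos t - 1) / sqrt (10 - 6*cos t) \<le> 1"
    using pos by (simp_all add: field_simps abs_le_iff)
qed

lemma three_cis_minus_one_polar:
  fixes t :: real
  assumes "0 \<le> t" "t \<le> pi"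
  shows "3 * cis t - 1 = complex_of_real (sqrt (10 - 6*cos t)) * cis (phase t)"
proof -
  define r where "r = sqrt (10 - 6*cos t)"
  define y where "y = (3*cos t - 1) / r"
  have rp: "r > 0" and yb: "-1 \<le> y" "y \<le> 1"
    using phase_arccos_arg[of t] unfolding r_def y_def by auto
  have r2: "r^2 = 10 - 6*cos t" unfolding r_def using phase_arccos_arg(1)[of t] by simp
  have cos_phase: "cos (phase t) = y" unfolding phase_def y_def[symmetric] r_def[symmetric]
    using yb by simp
  have "1 - y^2 = (r^2 - (3*cos t - 1)^2) / r^2" unfolding y_def using rp by (simp add: field_simps)
  also have "r^2 - (3*cos t - 1)^2 = (3 * sin t)^2" unfolding r2
    by (simp add: power2_diff power2_sum cos_squared_eq algebra_simps power_mult_distrib)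
  finally have "1 - y^2 = (3 * sin t / r)^2" by (simp add: power_divide)
  then have sin_phase: "sin (phase t) = 3 * sin t / r"
    unfolding phase_def y_def[symmetric] r_def[symmetric]
    using yb sin_ge_zero[OF assms] rp by (simp add: sin_arccos)
  show ?thesis unfolding r_def[symmetric]
    by (rule complex_eqI) (use rp in \<open>simp_all add: cos_phase sin_phase y_def\<close>)
qed

lemma continuous_on_phase: "continuous_on A phase"
  unfolding phase_def
  by (intro continuous_intros) (use phase_arccos_arg in \<open>auto simp: less_imp_neq[symmetric]\<close>)

lemma phase_0 [simp]: "phase 0 = 0" and phase_pi [simp]: "phase pi = pi"
  unfolding phase_def by simp_all

lemma norm_alex_half_perturbation_less:
  fixes t :: real
  assumes "cos t > -1"
  shows "cmod (2*(-1)^m * cis t^(n+1) * (1 - cis t)) < cmod (3 * cis t - 1)"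
proof -
  have norm_eq: "cmod (2*(-1)^m * cis t^(n+1) * (1 - cis t)) = 2 * cmod (1 - cis t)"
    by (simp add: norm_mult norm_power)
  have "(cmod (1 - cis t))^2 = 2 - 2*cos t"
    unfolding cmod_power2
    by (simp add: power2_diff power2_sum cos_squared_eq algebra_simps power_mult_distrib)
  moreover have "(cmod (3 * cis t - 1))^2 = 10 - 6*cos t"
    unfolding cmod_power2
    by (simp add: power2_diff power2_sum cos_squared_eq algebra_simps power_mult_distrib)
  ultimately have "(2 * cmod (1 - cis t))^2 < (cmod (3 * cis t - 1))^2"
    unfolding power_mult_distrib using assms by simp
  then show ?thesis unfolding norm_eq by (rule power2_less_imp_less) simp
qed

text \<open>\<open>alex_half m n (cis t)\<close> is \<open>3 cis t - 1\<close> plus a perturbation of smaller modulus, so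
  at the points where the rotation by \<open>-M t\<close> makes \<open>3 cis t - 1\<close> real, it fixes the sign of
  the real part.\<close>

lemma sign_Re_rotated_alex_half:
  fixes t :: real and k M :: nat
  assumes t: "0 \<le> t" "t < pi" and eq: "real M * t - phase t = real k * pi"
  shows "(-1)^k * Re (cis (-(real M * t)) * alex_half m n (cis t)) > 0"
proof -
  define r where "r = sqrt (10 - 6*cos t)"
  define V where "V = 2*(-1)^m * cis t^(n+1) * (1 - cis t)"
  have rp: "r > 0" unfolding r_def using phase_arccos_arg(1) .
  have "cos pi < cos t" using t by (intro cos_monotone_0_pi) auto
  then have ct: "cos t > -1" by simp
  have polar: "3 * cis t - 1 = complex_of_real r * cis (phase t)"
    unfolding r_def using three_cis_minus_one_polar t by simp
  then have "cmod (3 * cis t - 1) = r" using rp by (simp add: norm_mult)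
  then have V_less: "cmod V < r" unfolding V_def using norm_alex_half_perturbation_less[OF ct] by simp
  have "cis (-(real M * t)) * (3 * cis t - 1) = complex_of_real r * cis (- (real k * pi))"
    unfolding polar using eq by (simp add: cis_mult algebra_simps)
  also have "cis (- (real k * pi)) = complex_of_real ((-1)^k)"
    by (rule complex_eqI) simp_all
  finally have "cis (-(real M * t)) * (3 * cis t - 1) = complex_of_real (r * (-1)^k)" by simp
  moreover have "alex_half m n (cis t) = (3 * cis t - 1) + V"
    unfolding alex_half_def V_def by (simp add: algebra_simps)
  ultimately have "Re (cis (-(real M * t)) * alex_half m n (cis t))
      = r * (-1)^k + Re (cis (-(real M * t)) * V)"
    by (simp add: distrib_left)
  moreover have "\<bar>Re (cis (-(real M * t)) * V)\<bar> < r"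
    using abs_Re_le_cmod[of "cis (-(real M * t)) * V"] V_less by (simp add: norm_mult)
  ultimately show ?thesis
    by (cases "even k") (auto simp: abs_less_iff)
qed

definition rotated_phase :: "nat \<Rightarrow> real \<Rightarrow> real" where
  "rotated_phase M t = real M * t - phase t"

lemma rotated_phase_pi: "rotated_phase M pi = (real M - 1) * pi"
  by (simp add: rotated_phase_def algebra_simps)

lemma rotated_phase_level_points:
  assumes "K \<le> M - 1"
  shows "\<exists>th::nat \<Rightarrow> real. (\<forall>k\<le>K. 0 \<le> th k \<and> th k \<le> pi \<and> rotated_phase M (th k) = real k * pi)
           \<and> (\<forall>i j. i < j \<longrightarrow> j \<le> K \<longrightarrow> th i < th j)"
  using assms
proof (induction K)
  case 0
  show ?case by (rule exI[of _ "\<lambda>_. 0"]) (simp add: rotated_phase_def)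
next
  case (Suc K)
  then obtain th where th: "\<forall>k\<le>K. 0 \<le> th k \<and> th k \<le> pi \<and> rotated_phase M (th k) = real k * pi"
    and mono: "\<forall>i j. i < j \<longrightarrow> j \<le> K \<longrightarrow> th i < th j" by auto
  have thK: "0 \<le> th K" "th K \<le> pi" "rotated_phase M (th K) = real K * pi" using th by auto
  have "real (Suc K) * pi \<le> rotated_phase M pi"
    unfolding rotated_phase_pi using Suc.prems by (intro mult_right_mono) auto
  moreover have "continuous_on {th K..pi} (rotated_phase M)"
    unfolding rotated_phase_def by (intro continuous_intros continuous_on_phase)
  ultimately obtain x where x: "th K \<le> x" "x \<le> pi" "rotated_phase M x = real (Suc K) * pi"
    using IVT'[of "rotated_phase M" "th K" "real (Suc K) * pi" pi] thK by auto
  then have "th K < x" using thK(3) by (cases "x = th K") auto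
  show ?case
  proof (intro exI[of _ "th(Suc K := x)"] conjI allI impI)
    fix k assume "k \<le> Suc K"
    then show "0 \<le> (th(Suc K := x)) k" "(th(Suc K := x)) k \<le> pi"
      "rotated_phase M ((th(Suc K := x)) k) = real k * pi"
      using th x thK by (auto simp: fun_upd_def)
  next
    fix i j :: nat assume "i < j" "j \<le> Suc K"
    moreover have "th i \<le> th K" if "i \<le> K"
      using mono that by (cases "i = K") (auto simp: less_imp_le)
    ultimately show "(th(Suc K := x)) i < (th(Suc K := x)) j"
      using mono \<open>th K < x\<close> by (cases "j = Suc K") auto
  qed
qed

lemma alex_numerator_zero_between:
  assumes "2*M = m+n+3" and "0 \<le> a" "a < b" "b < pi"
    and "rotated_phase M a = real k * pi" "rotated_phase M b = real (Suc k) * pi"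
  shows "\<exists>z. a < z \<and> z < b \<and> alex_numerator m n (cis z) = 0"
proof -
  define g where "g t = (-1)^k * Re (cis (-(real M * t)) * alex_half m n (cis t))" for t
  have ga: "g a > 0"
    unfolding g_def using assms by (intro sign_Re_rotated_alex_half) (auto simp: rotated_phase_def)
  have "(-1)^Suc k * Re (cis (-(real M * b)) * alex_half m n (cis b)) > 0"
    using assms by (intro sign_Re_rotated_alex_half) (auto simp: rotated_phase_def)
  then have gb: "g b < 0" unfolding g_def by simp
  have "continuous_on {a..b} g" unfolding g_def alex_half_def by (intro continuous_intros)
  then obtain z where z: "a \<le> z" "z \<le> b" "g z = 0"
    using IVT2'[of g b 0 a] ga gb \<open>a < b\<close> by force
  have "real (2*M) = real (m+n+3)" using assms(1) by (simp only:)
  then have "real (m+n+3) / 2 = real M" by simp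
  then have "alex_numerator m n (cis z) = 0"
    using z(3) by (intro alex_numerator_cis_eq_0) (simp add: g_def)
  moreover have "z \<noteq> a" "z \<noteq> b" using z(3) ga gb by auto
  ultimately show ?thesis using z by (intro exI[of _ z]) auto
qed

lemma inj_on_interlacing:
  fixes th Z :: "nat \<Rightarrow> 'a::linorder"
  assumes "\<And>k. k < d \<Longrightarrow> th k < Z k \<and> Z k < th (Suc k)"
    and "\<And>i j. i < j \<Longrightarrow> j < d \<Longrightarrow> th i < th j"
  shows "inj_on Z {..<d}"
proof -
  have less: "Z k < Z j" if kj: "k < j" "j < d" for k j
  proof -
    have "Z k < th (Suc k)" using assms(1) kj by auto
    also have "th (Suc k) \<le> th j" using assms(2)[of "Suc k" j] kj by (cases "Suc k = j") auto
    also have "th j < Z j" using assms(1) kj by auto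
    finally show ?thesis .
  qed
  show ?thesis by (rule inj_onI) (metis lessThan_iff less less_irrefl neq_iff)
qed

text \<open>The rotated phase runs from 0 to \<open>(M-1)\<pi>\<close> on \<open>[0, \<pi>]\<close>; between consecutive points
  where it equals \<open>0, \<pi>, \<dots>, (M-2)\<pi>\<close> the sign changes give \<open>M-2\<close> zeros in \<open>(0, \<pi>)\<close>.\<close>

lemma alex_numerator_unit_circle_zeros:
  assumes M: "2*M = m+n+3"
  obtains Z :: "nat \<Rightarrow> real"
  where "inj_on Z {..<M-2}"
    and "\<And>k. k < M-2 \<Longrightarrow> 0 < Z k \<and> Z k < pi \<and> alex_numerator m n (cis (Z k)) = 0"
proof -
  obtain th where th: "\<forall>k\<le>M-1. 0 \<le> th k \<and> th k \<le> pi \<and> rotated_phase M (th k) = real k * pi"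
    and mono: "\<forall>i j. i < j \<longrightarrow> j \<le> M-1 \<longrightarrow> th i < th j"
    using rotated_phase_level_points[of "M-1" M] by auto
  have below_pi: "th k < pi" if "k \<le> M-2" for k
  proof -
    have "k \<le> M-1" "real k < real M - 1" using that M by linarith+
    then have "th k \<le> pi" "rotated_phase M (th k) \<noteq> rotated_phase M pi"
      using th unfolding rotated_phase_pi by auto
    then show ?thesis by (cases "th k = pi") auto
  qed
  have "\<exists>z. th k < z \<and> z < th (Suc k) \<and> alex_numerator m n (cis z) = 0" if "k < M-2" for k
    using th mono below_pi that by (intro alex_numerator_zero_between[OF M]) auto
  then obtain Z where Z: "\<forall>k<M-2. th k < Z k \<and> Z k < th (Suc k) \<and> alex_numerator m n (cis (Z k)) = 0"
    by metis
  show ?thesis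
  proof
    show "inj_on Z {..<M-2}" by (rule inj_on_interlacing) (use Z mono in auto)
  next
    fix k assume k: "k < M-2"
    have "0 \<le> th k" "th k < Z k" using Z th k by auto
    moreover have "Z k < pi" using Z below_pi[of "Suc k"] k by force
    ultimately show "0 < Z k \<and> Z k < pi \<and> alex_numerator m n (cis (Z k)) = 0" using Z k by auto
  qed
qed

section \<open>Counting the roots\<close>

lemma roots_eq_and_simple_if_card_eq_degree:
  fixes p :: "'a::idom poly"
  assumes "p \<noteq> 0" "S \<subseteq> {z. poly p z = 0}" "card S = degree p"
  shows "{z. poly p z = 0} = S" and "z \<in> S \<Longrightarrow> order z p = 1"
proof -
  define R where "R = {z. poly p z = 0}"
  have fin: "finite R" unfolding R_def using poly_roots_finite[OF assms(1)] .
  have ord_pos: "order z p \<ge> 1" if "z \<in> R" for z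
    using that assms(1) order_root[of p z] unfolding R_def by auto
  have "card R \<le> (\<Sum>z\<in>R. order z p)"
    using sum_mono[of R "\<lambda>_. 1::nat" "\<lambda>z. order z p"] ord_pos by simp
  also have "\<dots> \<le> card S"
    using sum_order_le_degree[OF assms(1)] assms(3) unfolding R_def by simp
  finally have "card R \<le> card S" .
  moreover have "S \<subseteq> R" using assms(2) unfolding R_def .
  ultimately show RS: "{z. poly p z = 0} = S"
    using card_subset_eq[OF fin] card_mono[OF fin] unfolding R_def by (metis le_antisym)
  have finS: "finite S" and pos: "\<And>z. z \<in> S \<Longrightarrow> order z p \<ge> 1"
    using fin ord_pos RS unfolding R_def by auto
  have "(\<Sum>z\<in>S. order z p) \<le> card S"
    using sum_order_le_degree[OF assms(1)] assms(3) RS by simp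
  then have "(\<Sum>z\<in>S. order z p - 1) = 0"
    using pos by (simp add: sum_subtractf_nat)
  then have "\<forall>z\<in>S. order z p - 1 = 0" using finS by simp
  then show "order z p = 1" if "z \<in> S" using pos[OF that] that by auto
qed

lemma map_poly_of_real_mult:
  "map_poly (of_real :: real \<Rightarrow> 'a::real_field) (p * q) = map_poly of_real p * map_poly of_real q"
  by (rule poly_eqI) (simp add: coeff_map_poly coeff_mult)

lemma order_le_order_map_poly_of_real:
  fixes p :: "real poly"
  assumes "p \<noteq> 0"
  shows "order x p \<le> order (of_real x) (map_poly (of_real :: real \<Rightarrow> 'a::real_field) p)"
proof -
  have hom_power: "map_poly (of_real :: real \<Rightarrow> 'a) (q ^ k) = map_poly of_real q ^ k" for q k
    by (induction k) (simp_all add: map_poly_of_real_mult)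
  obtain q where q: "p = [:-x,1:] ^ order x p * q" using order_1[of x p] by (elim dvdE)
  have "map_poly (of_real :: real \<Rightarrow> 'a) [:-x,1:] = [:-of_real x,1:]"
    by (simp add: map_poly_pCons)
  then have "map_poly (of_real :: real \<Rightarrow> 'a) p = [:-of_real x,1:] ^ order x p * map_poly of_real q"
    by (subst q) (simp only: map_poly_of_real_mult hom_power)
  then have "[:-of_real x,1:] ^ order x p dvd map_poly (of_real :: real \<Rightarrow> 'a) p" by simp
  moreover have "map_poly (of_real :: real \<Rightarrow> 'a) p \<noteq> 0" using assms by (simp add: map_poly_eq_0_iff)
  ultimately show ?thesis using order_divides by blast
qed

lemma card_cis_conjugate_pairs:
  assumes "inj_on Z {..<d}" "\<And>k. k < d \<Longrightarrow> 0 < Z k \<and> Z k < pi"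
  shows "card ((\<lambda>k. cis (Z k)) ` {..<d} \<union> (\<lambda>k. cis (- Z k)) ` {..<d}) = 2*d"
proof -
  have cos_inj: "k = j" if "k \<in> {..<d}" "j \<in> {..<d}" "cos (Z k) = cos (Z j)" for k j
  proof -
    have "Z k = Z j" using assms(2) that by (intro cos_inj_pi[of "Z k" "Z j"]) (auto simp: less_imp_le)
    then show ?thesis using assms(1) that by (simp add: inj_on_eq_iff)
  qed
  have "inj_on (\<lambda>k. cis (Z k)) {..<d}"
    by (rule inj_onI, rule cos_inj) (simp_all flip: cis.sel(1))
  moreover have "inj_on (\<lambda>k. cis (- Z k)) {..<d}"
  proof (rule inj_onI, rule cos_inj)
    fix k j assume "cis (- Z k) = cis (- Z j)"
    then have "Re (cis (- Z k)) = Re (cis (- Z j))" by simp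
    then show "cos (Z k) = cos (Z j)" by simp
  qed
  moreover have "sin (Z k) > 0" if "k < d" for k using assms(2)[OF that] by (intro sin_gt_zero) auto
  then have "\<forall>z\<in>(\<lambda>k. cis (Z k)) ` {..<d}. Im z > 0" "\<forall>z\<in>(\<lambda>k. cis (- Z k)) ` {..<d}. Im z < 0"
    by auto
  then have "(\<lambda>k. cis (Z k)) ` {..<d} \<inter> (\<lambda>k. cis (- Z k)) ` {..<d} = {}"
    by (metis disjoint_iff less_asym)
  ultimately show ?thesis by (simp add: card_Un_disjoint card_image)
qed

lemma poly_alex_K_r_mn_0_1:
  assumes "odd (m+n)"
  shows "poly (map_poly real_of_int (alex_K (cfrac (r_mn m n)))) 0 = -1"
    and "poly (map_poly real_of_int (alex_K (cfrac (r_mn m n)))) 1 = 1"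
  using alex_K_r_mn_times_square[OF assms, of "0::real"] alex_K_r_mn_times_square[OF assms, of "1::real"]
  by (simp_all add: alex_numerator_def)

lemma alex_K_r_mn_real_root_pair:
  assumes odd: "odd (m+n)"
  defines "P \<equiv> map_poly real_of_int (alex_K (cfrac (r_mn m n)))"
  obtains a where "0 < a" "a < 1" "poly P a = 0" "poly P (inverse a) = 0"
proof -
  have "continuous_on {0..1} (poly P)" by (intro continuous_intros)
  then obtain a where a: "0 \<le> a" "a \<le> 1" "poly P a = 0"
    using IVT'[of "poly P" 0 0 1] poly_alex_K_r_mn_0_1[OF odd] unfolding P_def by auto
  then have a01: "0 < a" "a < 1"
    using poly_alex_K_r_mn_0_1[OF odd] unfolding P_def by (auto simp: order.order_iff_strict)
  have "alex_numerator m n a = 0"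
    using alex_K_r_mn_times_square[OF odd, of a] a(3) unfolding P_def by simp
  then have "alex_numerator m n (inverse a) = 0"
    using alex_numerator_reciprocal[of a m n] a01 by simp
  moreover have "1 + inverse a \<noteq> 0" using a01 by (smt (verit) inverse_positive_iff_positive)
  ultimately have "poly P (inverse a) = 0"
    using alex_K_r_mn_times_square[OF odd, of "inverse a"] unfolding P_def by simp
  then show ?thesis using that a01 a(3) by blast
qed

lemma alex_K_r_mn_circle_roots:
  assumes odd: "odd (m+n)"
  defines "P \<equiv> map_poly complex_of_int (alex_K (cfrac (r_mn m n)))"
  obtains U where "finite U" "card U = m+n-1"
    and "\<And>z. z \<in> U \<Longrightarrow> z \<notin> \<real> \<and> cmod z = 1" "\<And>z. z \<in> U \<Longrightarrow> poly P z = 0"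
proof -
  define M where "M = (m+n+3) div 2"
  have M: "2*M = m+n+3" using odd unfolding M_def by (auto elim!: oddE)
  obtain Z where Z_inj: "inj_on Z {..<M-2}"
    and Z: "\<And>k. k < M-2 \<Longrightarrow> 0 < Z k \<and> Z k < pi \<and> alex_numerator m n (cis (Z k)) = 0"
    using alex_numerator_unit_circle_zeros[OF M] by blast
  define U where "U = (\<lambda>k. cis (Z k)) ` {..<M-2} \<union> (\<lambda>k. cis (- Z k)) ` {..<M-2}"
  have sin_pos: "sin (Z k) > 0" if "k < M-2" for k using Z[OF that] by (intro sin_gt_zero) auto
  have root: "poly P (cis (Z k)) = 0" if "k < M-2" for k
  proof -
    have "Im (1 + cis (Z k)) \<noteq> 0" using sin_pos[OF that] by simp
    then have "1 + cis (Z k) \<noteq> 0" by (metis zero_complex.sel(2))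
    then show ?thesis using alex_K_r_mn_times_square[OF odd, of "cis (Z k)"] Z[OF that]
      unfolding P_def by simp
  qed
  have conj: "poly P (cnj z) = cnj (poly P z)" for z
  proof -
    have "map_poly cnj P = P" unfolding P_def by (simp add: map_poly_map_poly o_def)
    then show ?thesis using poly_cnj[of P z] by simp
  qed
  show ?thesis
  proof (rule that)
    show "finite U" unfolding U_def by simp
    have "card U = 2 * (M-2)" unfolding U_def using card_cis_conjugate_pairs[OF Z_inj] Z by simp
    then show "card U = m+n-1" using M odd by (cases "m+n") auto
    show "z \<notin> \<real> \<and> cmod z = 1" if "z \<in> U" for z
      using that unfolding U_def by (auto simp: complex_is_Real_iff dest: sin_pos)
    show "poly P z = 0" if "z \<in> U" for z
      using that root conj unfolding U_def by (auto simp: cis_cnj[symmetric])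
  qed
qed

lemma alex_K_r_mn_complex_roots:
  assumes odd: "odd (m+n)"
  defines "P \<equiv> map_poly complex_of_int (alex_K (cfrac (r_mn m n)))"
  obtains a U where "0 < a" "a < 1" "\<And>z. z \<in> U \<Longrightarrow> z \<notin> \<real> \<and> cmod z = 1"
    and "{z. poly P z = 0} = {of_real a, of_real (inverse a)} \<union> U"
    and "\<And>z. poly P z = 0 \<Longrightarrow> order z P = 1"
proof -
  obtain a where a: "0 < a" "a < 1" "poly (map_poly real_of_int (alex_K (cfrac (r_mn m n)))) a = 0"
    "poly (map_poly real_of_int (alex_K (cfrac (r_mn m n)))) (inverse a) = 0"
    using alex_K_r_mn_real_root_pair[OF odd] by blast
  obtain U where U: "finite U" "card U = m+n-1" "\<And>z. z \<in> U \<Longrightarrow> z \<notin> \<real> \<and> cmod z = 1"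
    "\<And>z. z \<in> U \<Longrightarrow> poly P z = 0"
    using alex_K_r_mn_circle_roots[OF odd] unfolding P_def by blast
  have "poly P (of_real x) = of_real (poly (map_poly real_of_int (alex_K (cfrac (r_mn m n)))) x)"
    for x unfolding P_def by (simp add: poly_altdef degree_map_poly coeff_map_poly)
  then have "poly P (of_real a) = 0" "poly P (of_real (inverse a)) = 0"
    using a(3,4) by (simp_all only: of_real_0)
  then have roots: "{of_real a, of_real (inverse a)} \<union> U \<subseteq> {z. poly P z = 0}"
    using U(4) by auto
  have "inverse a > 1" using a by (simp add: one_less_inverse)
  then have "complex_of_real a \<noteq> of_real (inverse a)" using a(2) by (simp only: of_real_eq_iff)
  then have "card {complex_of_real a, of_real (inverse a)} = 2" by (simp only: card_2_iff) blast
  moreover have "{complex_of_real a, of_real (inverse a)} \<inter> U = {}"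
    using U(3) Reals_of_real by blast
  ultimately have "card ({of_real a, of_real (inverse a)} \<union> U) = 2 + card U"
    using U(1) by (metis card_Un_disjoint finite.emptyI finite.insertI)
  moreover have "degree P = m+n+1"
    unfolding P_def by (simp add: degree_map_poly degree_alex_K_r_mn[OF odd])
  ultimately have card: "card ({of_real a, of_real (inverse a)} \<union> U) = degree P"
    using U(2) odd by (cases "m+n") auto
  have "P \<noteq> 0" using \<open>degree P = m+n+1\<close> by auto
  note all_roots = roots_eq_and_simple_if_card_eq_degree[OF \<open>P \<noteq> 0\<close> roots card]
  have "order z P = 1" if "poly P z = 0" for z using all_roots that by blast
  then show ?thesis using that[OF a(1,2) U(3) all_roots(1)] by blast
qed

lemma alex_K_r_mn_real_roots:
  assumes odd: "odd (m+n)"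
  defines "R \<equiv> map_poly real_of_int (alex_K (cfrac (r_mn m n)))"
  shows "(\<Sum>x\<in>{x. poly R x = 0}. order x R) = 2"
proof -
  define C where "C = map_poly complex_of_int (alex_K (cfrac (r_mn m n)))"
  obtain a U where a: "0 < a" "a < 1" and U: "\<And>z. z \<in> U \<Longrightarrow> z \<notin> \<real> \<and> cmod z = 1"
    and roots: "{z. poly C z = 0} = {of_real a, of_real (inverse a)} \<union> U"
    and simple: "\<And>z. poly C z = 0 \<Longrightarrow> order z C = 1"
    using alex_K_r_mn_complex_roots[OF odd] unfolding C_def by blast
  have "poly C (of_real x) = of_real (poly R x)" for x
    unfolding C_def R_def by (simp add: poly_altdef degree_map_poly coeff_map_poly)
  then have "poly R x = 0 \<longleftrightarrow> complex_of_real x \<in> {z. poly C z = 0}" for x by simp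
  also have "\<dots> x \<longleftrightarrow> x = a \<or> x = inverse a" for x
    unfolding roots using U[of "of_real x"] by (auto simp del: of_real_inverse)
  finally have R_roots: "{x. poly R x = 0} = {a, inverse a}" by blast
  have "R \<noteq> 0" using poly_alex_K_r_mn_0_1(2)[OF odd] unfolding R_def by auto
  have "order x R = 1" if "x \<in> {a, inverse a}" for x
  proof (rule antisym)
    show "1 \<le> order x R" using that R_roots \<open>R \<noteq> 0\<close> order_root[of R x] by auto
    have "map_poly of_real R = C" unfolding R_def C_def by (simp add: map_poly_map_poly o_def)
    moreover have "complex_of_real x \<in> {z. poly C z = 0}" unfolding roots using that by auto
    ultimately show "order x R \<le> 1"
      using order_le_order_map_poly_of_real[OF \<open>R \<noteq> 0\<close>, of x, where 'a = complex] simple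
      by simp
  qed
  moreover have "a \<noteq> inverse a" using a one_less_inverse[of a] by linarith
  ultimately show ?thesis unfolding R_roots by simp
qed

lemma alex_K_r_mn_nonreal_roots:
  assumes odd: "odd (m+n)"
  defines "C \<equiv> map_poly complex_of_int (alex_K (cfrac (r_mn m n)))"
  assumes root: "poly C z = 0" and nonreal: "z \<notin> \<real>"
  shows "cmod z = 1"
proof (rule alex_K_r_mn_complex_roots[OF odd, folded C_def])
  fix a U
  assume U: "\<And>z. z \<in> U \<Longrightarrow> z \<notin> \<real> \<and> cmod z = 1"
    and roots: "{z. poly C z = 0} = {of_real a, of_real (inverse a)} \<union> U"
  have "z \<in> {of_real a, of_real (inverse a)} \<union> U" using roots root by blast
  moreover have "z \<notin> {of_real a, of_real (inverse a)}" using nonreal by auto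
  ultimately show "cmod z = 1" using U by blast
qed

theorem proposition13p5:
  fixes m n :: nat
  assumes "n \<le> m" and "odd (m + n)"
  defines "D \<equiv> alex_K (cfrac (r_mn m n))"
  shows "degree D = m + n + 1
    \<and> (\<Sum>x\<in>{x::real. poly (map_poly of_int D) x = 0}. order x (map_poly of_int D)) = 2
    \<and> poly (map_poly (of_int :: int \<Rightarrow> real) D) 1 \<noteq> 0
    \<and> (\<forall>z::complex. poly (map_poly of_int D) z = 0 \<and> z \<notin> \<real> \<longrightarrow> cmod z = 1)"
proof (intro conjI allI impI)
  show "degree D = m + n + 1" unfolding D_def by (rule degree_alex_K_r_mn[OF assms(2)])
  show "(\<Sum>x\<in>{x::real. poly (map_poly of_int D) x = 0}. order x (map_poly of_int D)) = 2"
    unfolding D_def by (rule alex_K_r_mn_real_roots[OF assms(2)])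
  show "poly (map_poly (of_int :: int \<Rightarrow> real) D) 1 \<noteq> 0"
    unfolding D_def using poly_alex_K_r_mn_0_1(2)[OF assms(2)] by simp
  fix z :: complex assume "poly (map_poly of_int D) z = 0 \<and> z \<notin> \<real>"
  then show "cmod z = 1" unfolding D_def using alex_K_r_mn_nonreal_roots[OF assms(2)] by blast
qed
end
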